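(* Let $\mathcal{G}=\langle S,A,T,s_0,F\rangle$ be a two-player turn-based deterministic reachability game, let $X,Y\subseteq\mathrm{Win}_2(\mathcal{G},F)\setminus F$ with $X\cap Y=\emptyset$, and let $s\in\mathrm{Win}_2(\mathcal{G},F)\setminus(F\cup Y)$. Then the set of actions at $s$ that are subjectively rationalizable for P2 under the almost-sure winning condition in $\mathcal{G}$ (with goal $F$) is equal to the set of actions at $s$ that are subjectively rationalizable for P2 under the almost-sure winning condition in P2's perceptual game $\mathcal{G}^2_{X,Y}$ (with goal $F\cup Y$).
   Context: A two-player turn-based deterministic reachability game is a tuple $\mathcal{G}=\langle S,A,T,s_0,F\rangle$: $S$ finite, partitioned into P1 states $S_1$ and P2 states $S_2$; $A=A_1\cup A_2$ (P1 and P2 actions); $T:(S_1\times A_1)\cup(S_2\times A_2)\to S$ deterministic, possibly partial ($a$ enabled at $s$ iff $T(s,a)$ defined; every state has an enabled action); $s_0$ initial; $F\subseteq S$ a set of sink states (P2's goal). For a target $R\subseteq S$: $Z_0=R$, $Z_{k+1}=Z_k\cup\{s\in S_1:T(s,a)\in Z_k\ \forall\text{ enabled }a\}\cup\{s\in S_2:T(s,a)\in Z_k\text{ for some enabled }a\}$, and $\mathrm{Win}_2(\mathcal{G},R)=\bigcup_kZ_k$ (P2's sure/almost-sure winning region for reaching $R$). P2's perceptual game $\mathcal{G}^2_{X,Y}=\langle S,A,T,s_0,F\cup Y\rangle$ has the same transitions $T$ and goal set $F\cup Y$. In a game with transitions $T$ and P2-goal $R$, the set of actions at a state $q$ that are subjectively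 rationalizable for P2 under the almost-sure winning condition is: if $q\in S_2\cap\mathrm{Win}_2(\mathcal{G},R)\setminus R$, the set $\{a\text{ enabled at }q:T(q,a)\in\mathrm{Win}_2(\mathcal{G},R)\}$; otherwise (P1 states and P2 states outside $\mathrm{Win}_2(\mathcal{G},R)\setminus R$), all actions enabled at $q$. *)

theory Defs
  imports Main
begin

text \<open>A two-player turn-based deterministic reachability game
  G = (S, A, T, s0, F), S partitioned into S1 (P1) and S2 (P2),
  A = A1 \<union> A2; the partial deterministic transition function is
  modelled as T :: 's \<Rightarrow> 'a \<Rightarrow> 's option
  (action a enabled at s iff T s a \<noteq> None).\<close>

record ('s, 'a) game =
  st1 :: "'s set"
  st2 :: "'s set"
  act1 :: "'a set"
  act2 :: "'a set"
  trans :: "'s \<Rightarrow> 'a \<Rightarrow> 's option"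
  init :: 's
  goal :: "'s set"

definition states :: "('s, 'a) game \<Rightarrow> 's set" where
  "states G = st1 G \<union> st2 G"

definition enabled :: "('s, 'a) game \<Rightarrow> 's \<Rightarrow> 'a \<Rightarrow> bool" where
  "enabled G s a \<longleftrightarrow> trans G s a \<noteq> None"

definition well_formed_game :: "('s, 'a) game \<Rightarrow> bool" where
  "well_formed_game G \<longleftrightarrow>
     finite (states G) \<and>
     st1 G \<inter> st2 G = {} \<and>
     (\<forall>s a. enabled G s a \<longrightarrow>
        (s \<in> st1 G \<and> a \<in> act1 G) \<or> (s \<in> st2 G \<and> a \<in> act2 G)) \<and>
     (\<forall>s a t. trans G s a = Some t \<longrightarrow> t \<in> states G) \<and>
     (\<forall>s \<in> states G. \<exists>a. enabled G s a) \<and>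
     init G \<in> states G \<and>
     goal G \<subseteq> states G \<and>
     (\<forall>f \<in> goal G. \<forall>a t. trans G f a = Some t \<longrightarrow> t = f)"

fun Zk :: "('s, 'a) game \<Rightarrow> 's set \<Rightarrow> nat \<Rightarrow> 's set" where
  "Zk G R 0 = R"
| "Zk G R (Suc k) = Zk G R k
     \<union> {s \<in> st1 G. \<forall>a t. trans G s a = Some t \<longrightarrow> t \<in> Zk G R k}
     \<union> {s \<in> st2 G. \<exists>a t. trans G s a = Some t \<and> t \<in> Zk G R k}"

definition Win2 :: "('s, 'a) game \<Rightarrow> 's set \<Rightarrow> 's set" where
  "Win2 G R = (\<Union>k. Zk G R k)"

definition perceptual_game2 :: "('s, 'a) game \<Rightarrow> 's set \<Rightarrow> 's set \<Rightarrow> ('s, 'a) game" where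
  "perceptual_game2 G X Y = G\<lparr>goal := goal G \<union> Y\<rparr>"

definition subj_rat_AS :: "('s, 'a) game \<Rightarrow> 's \<Rightarrow> 'a set" where
  "subj_rat_AS G q =
     (if q \<in> st2 G \<inter> (Win2 G (goal G) - goal G)
      then {a. enabled G q a \<and> the (trans G q a) \<in> Win2 G (goal G)}
      else {a. enabled G q a})"

end

theory Submission
  imports Defs
begin

text \<open>Turning goal states from which P2 already wins almost surely into additional goal
  states does not change P2's winning region: the attractor of a subset of the winning
  region stays inside it, because the winning region is closed under the controllable
  predecessor (this needs finite branching at P1 states). The perceptual game has the
  same transitions as \<open>G\<close> and its goal differs only by such states \<open>Y\<close>; as \<open>s \<notin> Y\<close>,
  the case distinction in the definition of rationalizable actions and the set of
  actions selected at \<open>s\<close> are the same in both games.\<close>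

definition successors :: "('s, 'a) game \<Rightarrow> 's \<Rightarrow> 's set" where
  "successors G s = {t. \<exists>a. trans G s a = Some t}"

lemma finite_successors:
  assumes "well_formed_game G"
  shows "finite (successors G s)"
proof (rule finite_subset)
  show "successors G s \<subseteq> states G" and "finite (states G)"
    using assms unfolding well_formed_game_def successors_def by blast+
qed

lemma Zk_goal_update [simp]: "Zk (G\<lparr>goal := F\<rparr>) R k = Zk G R k"
  by (induction k) auto

lemma Win2_goal_update [simp]: "Win2 (G\<lparr>goal := F\<rparr>) R = Win2 G R"
  unfolding Win2_def by simp

lemma Zk_mono: "i \<le> j \<Longrightarrow> Zk G R i \<subseteq> Zk G R j"
  by (rule lift_Suc_mono_le[of "Zk G R"]) auto

lemma Zk_mono_target: "R \<subseteq> R' \<Longrightarrow> Zk G R k \<subseteq> Zk G R' k"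
  by (induction k) auto

lemma target_subset_Win2: "R \<subseteq> Win2 G R"
  unfolding Win2_def using Zk.simps(1)[of G R] by blast

lemma Win2_mono: "R \<subseteq> R' \<Longrightarrow> Win2 G R \<subseteq> Win2 G R'"
  unfolding Win2_def by (intro UN_mono subset_refl Zk_mono_target)

lemma Win2_closed_st1:
  assumes "finite (successors G s)" "s \<in> st1 G"
    and "\<forall>a t. trans G s a = Some t \<longrightarrow> t \<in> Win2 G R"
  shows "s \<in> Win2 G R"
proof -
  have "successors G s \<subseteq> (\<Union>k. Zk G R k)"
    using assms(3) unfolding successors_def Win2_def by blast
  then obtain n where "successors G s \<subseteq> (\<Union>k<n. Zk G R k)"
    by (rule finite_countable_subset[OF assms(1)])
  also have "\<dots> \<subseteq> Zk G R n"
    by (intro UN_least Zk_mono) simp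
  finally have "s \<in> Zk G R (Suc n)"
    using assms(2) unfolding successors_def by auto
  then show ?thesis
    unfolding Win2_def by blast
qed

lemma Win2_closed_st2:
  assumes "s \<in> st2 G" "trans G s a = Some t" "t \<in> Win2 G R"
  shows "s \<in> Win2 G R"
proof -
  obtain k where "t \<in> Zk G R k"
    using assms(3) unfolding Win2_def by blast
  then have "s \<in> Zk G R (Suc k)"
    using assms(1,2) by auto
  then show ?thesis
    unfolding Win2_def by blast
qed

lemma Win2_subset_Win2:
  assumes "\<And>s. finite (successors G s)" and "R \<subseteq> Win2 G F"
  shows "Win2 G R \<subseteq> Win2 G F"
proof -
  have "Zk G R k \<subseteq> Win2 G F" for k
  proof (induction k)
    case 0
    then show ?case using assms(2) by simp
  next
    case (Suc k)
    show ?case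
    proof
      fix s
      assume "s \<in> Zk G R (Suc k)"
      then consider "s \<in> Zk G R k"
        | "s \<in> st1 G" "\<forall>a t. trans G s a = Some t \<longrightarrow> t \<in> Zk G R k"
        | a t where "s \<in> st2 G" "trans G s a = Some t" "t \<in> Zk G R k"
        by auto
      then show "s \<in> Win2 G F"
      proof cases
        case 1
        then show ?thesis using Suc.IH by blast
      next
        case 2
        then have "\<forall>a t. trans G s a = Some t \<longrightarrow> t \<in> Win2 G F"
          using Suc.IH by blast
        with assms(1) \<open>s \<in> st1 G\<close> show ?thesis
          by (rule Win2_closed_st1)
      next
        case 3
        then show ?thesis
          using Suc.IH by (blast intro: Win2_closed_st2)
      qed
    qed
  qed
  then show ?thesis
    unfolding Win2_def[of G R] by blast
qed

lemma Win2_Un_absorb: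
  assumes "\<And>s. finite (successors G s)" and "Y \<subseteq> Win2 G F"
  shows "Win2 G (F \<union> Y) = Win2 G F"
proof
  show "Win2 G (F \<union> Y) \<subseteq> Win2 G F"
    using assms(1) Un_least[OF target_subset_Win2 assms(2)] by (rule Win2_subset_Win2)
  show "Win2 G F \<subseteq> Win2 G (F \<union> Y)"
    by (rule Win2_mono) (rule Un_upper1)
qed

theorem lemma3:
  fixes G :: "('s, 'a) game" and X Y :: "'s set" and s :: 's
  assumes "well_formed_game G"
    and "X \<subseteq> Win2 G (goal G) - goal G"
    and "Y \<subseteq> Win2 G (goal G) - goal G"
    and "X \<inter> Y = {}"
    and "s \<in> Win2 G (goal G) - (goal G \<union> Y)"
  shows "subj_rat_AS G s = subj_rat_AS (perceptual_game2 G X Y) s"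
proof -
  let ?G' = "perceptual_game2 G X Y"
  have "Y \<subseteq> Win2 G (goal G)"
    using assms(3) by blast
  then have win: "Win2 ?G' (goal ?G') = Win2 G (goal G)"
    using finite_successors[OF assms(1)]
    by (simp add: Win2_Un_absorb perceptual_game2_def)
  show ?thesis
    unfolding subj_rat_AS_def win enabled_def
    using assms(5) by (simp add: perceptual_game2_def)
qed

end
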